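(* Let $I=(G,\mathcal{T},p)$ be a \textsc{DAG Multicut} instance satisfying the standing assumptions below, and let $G^*$ be its degree-reduced graph, with the sets $B_i$ as in its definition. Then: (1) $|N^+_{G^*}(T^s)|\le rp$; (2) for each $1\le i\le r$, $B_i$ is the $s_i-t_i$ mincut closest to $s_i$ in $G^*$; (3) $\Phi(I')=\Phi(I)$ where $I'=(G^*,\mathcal{T},p)$; (4) a set $Z\subseteq V(G)$ is a multicut in $(G^*,\mathcal{T})$ if and only if $Z$ is a multicut in $(G,\mathcal{T})$ such that for every $1\le i\le r$ and every $v\in B_i$, either $v\in Z$ or $Z$ is a $\{v\}-\{t_i\}$ separator in $G$; in particular $I'$ is a YES instance iff $I$ admits a solution with this property; (5) $S(G^*,v)\subseteq S(G,v)$ for every $v\in V(G)$, and if $(s_i,v)\in E(G^* )$ for some $i$ then $S(G^*,v)=S(G,v)$.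
   Context: \textsc{DAG Multicut}: input a directed acyclic graph $G$, terminal pairs $\mathcal{T}=\{(s_i,t_i):1\le i\le r\}$, integer $p$; terminals are all $s_i,t_i$. Standing assumptions: all terminals are pairwise distinct, each $s_i$ has no in-neighbours, each $t_i$ has no out-neighbours, and $\mathrm{cut}_G(s_i,t_i)\le p$ for all $i$. $T^s=\{s_1,\dots,s_r\}$; $N^+_G(Y)=(\bigcup_{y\in Y}\{u:(y,u)\in E(G)\})\setminus Y$. A multicut is a set of non-terminal vertices $Z$ with $t_i$ unreachable from $s_i$ in $G\setminus Z$ for all $i$; a solution is a multicut of size $\le p$. For disjoint non-empty $X,Y$, an $X-Y$ separator is a set of non-terminal vertices disjoint from $X\cup Y$ meeting every $X$–$Y$ path; $\mathrm{cut}_G(X,Y)$ is its minimum size ($\infty$ if an arc goes from $X$ to $Y$). A minimal separator $Z$ is important if no other $X-Y$ separator $Z'$ with $|Z'|\le|Z|$ satisfies: every vertex reachable from $X$ in $G\setminus Z$ is reachable from $X$ in $G\setminus Z'$. The unique minimum-size important $X-Y$ separator is the $X-Y$ mincut closest to $Y$; the $X-Y$ mincut closest to $X$ is the $Y-X$ mincut closest to $X$ in the graph with all arcs reversed. $S(G,v)$ is the set of sources $s_i$ from which $v$ is reachable in $G$. The potential is $\Phi((G,\mathcal{T},p))=(r+1)p-\sum_i\mathrm{cut}_G(s_i,t_i)$. Degree-reduced graph $G^*$: let $B_i$ be the $s_i-t_i$ mincut closest to $s_i$ in $G$; $V(G^* )=V(G)$, its arcs are all arcs of $G$ not incident to $T^s$,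 plus, for each $1\le i\le r$, the arcs $(s_i,v)$ for all $v\in B_i$, and the arcs $(s_i,v)$ for all $v\in\bigcup_{i'=1}^r B_{i'}$ with $s_i\in S(G,v)$ such that $v$ is not reachable in $G$ from any vertex of $B_i$. *)

theory Defs
  imports Main "HOL-Library.Extended_Real"
begin

definition idx :: "nat \<Rightarrow> nat set" where
  "idx r = {1..r}"

definition terminals :: "nat \<Rightarrow> (nat \<Rightarrow> 'a) \<Rightarrow> (nat \<Rightarrow> 'a) \<Rightarrow> 'a set" where
  "terminals r s t = s ` idx r \<union> t ` idx r"

definition del_arcs :: "('a \<times> 'a) set \<Rightarrow> 'a set \<Rightarrow> ('a \<times> 'a) set" where
  "del_arcs E Z = {(u, v). (u, v) \<in> E \<and> u \<notin> Z \<and> v \<notin> Z}"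

definition reach_set :: "('a \<times> 'a) set \<Rightarrow> 'a set \<Rightarrow> 'a set \<Rightarrow> 'a set" where
  "reach_set E Z X = {v. \<exists>x\<in>X. (x, v) \<in> (del_arcs E Z)\<^sup>*}"

definition is_sep :: "'a set \<Rightarrow> ('a \<times> 'a) set \<Rightarrow> 'a set \<Rightarrow> 'a set \<Rightarrow> 'a set \<Rightarrow> 'a set \<Rightarrow> bool" where
  "is_sep V E T X Y Z \<longleftrightarrow> Z \<subseteq> V \<and> Z \<inter> T = {} \<and> Z \<inter> (X \<union> Y) = {} \<and>
     (\<forall>x\<in>X. \<forall>y\<in>Y. (x, y) \<notin> (del_arcs E Z)\<^sup>*)"

definition cut :: "'a set \<Rightarrow> ('a \<times> 'a) set \<Rightarrow> 'a set \<Rightarrow> 'a set \<Rightarrow> 'a set \<Rightarrow> enat" where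
  "cut V E T X Y = (INF Z \<in> {Z. is_sep V E T X Y Z}. enat (card Z))"

definition minimal_sep :: "'a set \<Rightarrow> ('a \<times> 'a) set \<Rightarrow> 'a set \<Rightarrow> 'a set \<Rightarrow> 'a set \<Rightarrow> 'a set \<Rightarrow> bool" where
  "minimal_sep V E T X Y Z \<longleftrightarrow> is_sep V E T X Y Z \<and> (\<forall>Z'. Z' \<subset> Z \<longrightarrow> \<not> is_sep V E T X Y Z')"

definition important_sep :: "'a set \<Rightarrow> ('a \<times> 'a) set \<Rightarrow> 'a set \<Rightarrow> 'a set \<Rightarrow> 'a set \<Rightarrow> 'a set \<Rightarrow> bool" where
  "important_sep V E T X Y Z \<longleftrightarrow> minimal_sep V E T X Y Z \<and>
     \<not> (\<exists>Z'. Z' \<noteq> Z \<and> is_sep V E T X Y Z' \<and> card Z' \<le> card Z \<and>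
            reach_set E Z X \<subseteq> reach_set E Z' X)"

definition mincut_closest_to_Y :: "'a set \<Rightarrow> ('a \<times> 'a) set \<Rightarrow> 'a set \<Rightarrow> 'a set \<Rightarrow> 'a set \<Rightarrow> 'a set \<Rightarrow> bool" where
  "mincut_closest_to_Y V E T X Y Z \<longleftrightarrow> important_sep V E T X Y Z \<and>
     (\<forall>Z'. important_sep V E T X Y Z' \<longrightarrow> card Z \<le> card Z')"

definition mincut_closest_to_X :: "'a set \<Rightarrow> ('a \<times> 'a) set \<Rightarrow> 'a set \<Rightarrow> 'a set \<Rightarrow> 'a set \<Rightarrow> 'a set \<Rightarrow> bool" where
  "mincut_closest_to_X V E T X Y Z \<longleftrightarrow> mincut_closest_to_Y V (E\<inverse>) T Y X Z"

definition out_nbh :: "('a \<times> 'a) set \<Rightarrow> 'a set \<Rightarrow> 'a set" where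
  "out_nbh E Y = (\<Union>y\<in>Y. {u. (y, u) \<in> E}) - Y"

definition src_set :: "('a \<times> 'a) set \<Rightarrow> nat \<Rightarrow> (nat \<Rightarrow> 'a) \<Rightarrow> 'a \<Rightarrow> 'a set" where
  "src_set E r s v = {s i | i. i \<in> idx r \<and> (s i, v) \<in> E\<^sup>*}"

definition multicut :: "'a set \<Rightarrow> ('a \<times> 'a) set \<Rightarrow> nat \<Rightarrow> (nat \<Rightarrow> 'a) \<Rightarrow> (nat \<Rightarrow> 'a) \<Rightarrow> 'a set \<Rightarrow> bool" where
  "multicut V E r s t Z \<longleftrightarrow> Z \<subseteq> V \<and> Z \<inter> terminals r s t = {} \<and>
     (\<forall>i\<in>idx r. (s i, t i) \<notin> (del_arcs E Z)\<^sup>*)"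

definition solution :: "'a set \<Rightarrow> ('a \<times> 'a) set \<Rightarrow> nat \<Rightarrow> (nat \<Rightarrow> 'a) \<Rightarrow> (nat \<Rightarrow> 'a) \<Rightarrow> nat \<Rightarrow> 'a set \<Rightarrow> bool" where
  "solution V E r s t p Z \<longleftrightarrow> multicut V E r s t Z \<and> card Z \<le> p"

definition potential :: "'a set \<Rightarrow> ('a \<times> 'a) set \<Rightarrow> nat \<Rightarrow> (nat \<Rightarrow> 'a) \<Rightarrow> (nat \<Rightarrow> 'a) \<Rightarrow> nat \<Rightarrow> ereal" where
  "potential V E r s t p = ereal (real ((r + 1) * p)) -
     ereal_of_enat (\<Sum>i\<in>idx r. cut V E (terminals r s t) {s i} {t i})"

definition dag_mc_instance :: "'a set \<Rightarrow> ('a \<times> 'a) set \<Rightarrow> nat \<Rightarrow> (nat \<Rightarrow> 'a) \<Rightarrow> (nat \<Rightarrow> 'a) \<Rightarrow> nat \<Rightarrow> bool" where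
  "dag_mc_instance V E r s t p \<longleftrightarrow> finite V \<and> E \<subseteq> V \<times> V \<and> acyclic E \<and>
     s ` idx r \<subseteq> V \<and> t ` idx r \<subseteq> V \<and>
     inj_on s (idx r) \<and> inj_on t (idx r) \<and> s ` idx r \<inter> t ` idx r = {} \<and>
     (\<forall>i\<in>idx r. \<forall>u. (u, s i) \<notin> E) \<and> (\<forall>i\<in>idx r. \<forall>u. (t i, u) \<notin> E) \<and>
     (\<forall>i\<in>idx r. cut V E (terminals r s t) {s i} {t i} \<le> enat p)"

definition Bset :: "'a set \<Rightarrow> ('a \<times> 'a) set \<Rightarrow> nat \<Rightarrow> (nat \<Rightarrow> 'a) \<Rightarrow> (nat \<Rightarrow> 'a) \<Rightarrow> nat \<Rightarrow> 'a set" where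
  "Bset V E r s t i = (THE Z. mincut_closest_to_X V E (terminals r s t) {s i} {t i} Z)"

text \<open>Arc set of the degree-reduced graph G* (vertex set unchanged).\<close>
definition reduced_arcs :: "'a set \<Rightarrow> ('a \<times> 'a) set \<Rightarrow> nat \<Rightarrow> (nat \<Rightarrow> 'a) \<Rightarrow> (nat \<Rightarrow> 'a) \<Rightarrow> ('a \<times> 'a) set" where
  "reduced_arcs V E r s t =
     {(u, v). (u, v) \<in> E \<and> u \<notin> s ` idx r \<and> v \<notin> s ` idx r}
     \<union> {(s i, v) | i v. i \<in> idx r \<and> v \<in> Bset V E r s t i}
     \<union> {(s i, v) | i v. i \<in> idx r \<and> v \<in> (\<Union>i'\<in>idx r. Bset V E r s t i') \<and>
          s i \<in> src_set E r s v \<and>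
          \<not> (\<exists>b\<in>Bset V E r s t i. (b, v) \<in> E\<^sup>*)}"

end

theory Submission
  imports Defs
begin

(* A minimum separator Z is the out-neighbourhood of its x-side (the vertices reachable from x
   in G - Z), and by submodularity of out-neighbourhood sizes the minimum separators whose
   x-sides are largest form a unique "closest" one; this identifies the mincut closest to y
   defined via important separators, so each B_i is the closest minimum s_i-t_i separator of
   the reversed graph.

   For the reduced graph G*, which differs from G only in the arcs leaving the sources, the key
   lemma is: s_i reaches t_i in G* - Z iff some vertex of B_i - Z reaches t_i in G - Z.  From it
   the separators of G* are separators of G, B_i stays a minimum and closest separator (parts 2
   and 3), and the multicuts of G* are characterised (part 4).  Parts 1 and 5 follow directly
   from the shape of the new arcs. *)

lemma del_arcs_subset: "del_arcs E Z \<subseteq> E"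
  by (auto simp: del_arcs_def)

lemma del_arcs_empty [simp]: "del_arcs E {} = E"
  by (auto simp: del_arcs_def)

lemma del_arcs_antimono: "Z \<subseteq> Z' \<Longrightarrow> del_arcs E Z' \<subseteq> del_arcs E Z"
  by (auto simp: del_arcs_def)

lemma path_avoiding_imp_path: "(a, b) \<in> (del_arcs E Z)\<^sup>* \<Longrightarrow> (a, b) \<in> E\<^sup>*"
  using rtrancl_mono[OF del_arcs_subset] by blast

lemma path_avoiding_antimono:
  "(a, b) \<in> (del_arcs E Z')\<^sup>* \<Longrightarrow> Z \<subseteq> Z' \<Longrightarrow> (a, b) \<in> (del_arcs E Z)\<^sup>*"
  using rtrancl_mono[OF del_arcs_antimono] by blast

lemma path_avoiding_converse:
  "(a, b) \<in> (del_arcs (E\<inverse>) Z)\<^sup>* \<longleftrightarrow> (b, a) \<in> (del_arcs E Z)\<^sup>*"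
proof -
  have "del_arcs (E\<inverse>) Z = (del_arcs E Z)\<inverse>"
    by (auto simp: del_arcs_def)
  then show ?thesis
    by (simp add: rtrancl_converse)
qed

lemma is_sep_converse: "is_sep V (E\<inverse>) T {y} {x} = is_sep V E T {x} {y}"
  by (intro ext) (auto simp: is_sep_def path_avoiding_converse)

lemma cut_converse: "cut V (E\<inverse>) T {y} {x} = cut V E T {x} {y}"
  unfolding cut_def is_sep_converse ..

lemma path_avoiding_stays_outside:
  assumes "(a, v) \<in> (del_arcs E Z)\<^sup>*" "a \<notin> Z"
  shows "v \<notin> Z"
  using assms by (induction rule: rtrancl_induct) (auto simp: del_arcs_def)

lemma path_avoiding_stays_outside_backward:
  assumes "(v, b) \<in> (del_arcs E Z)\<^sup>*" "b \<notin> Z"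
  shows "v \<notin> Z"
  using assms by (induction rule: converse_rtrancl_induct) (auto simp: del_arcs_def)

lemma path_meets_set:
  assumes "(a, b) \<in> (del_arcs E Z)\<^sup>*" "(a, b) \<notin> (del_arcs E (Z \<union> B))\<^sup>*"
  shows "\<exists>c\<in>B. c \<notin> Z \<and> (a, c) \<in> (del_arcs E Z)\<^sup>* \<and> (c, b) \<in> (del_arcs E Z)\<^sup>*"
  using assms
proof (induction rule: converse_rtrancl_induct)
  case base
  then show ?case by simp
next
  case (step a a')
  show ?case
  proof (cases "a' \<in> B")
    case True
    then show ?thesis
      using step(1,2) by (auto simp: del_arcs_def)
  next
    case a'_outside: False
    show ?thesis
    proof (cases "a \<in> B")
      case True
      then show ?thesis
        using step(1,2) by (auto simp: del_arcs_def intro: converse_rtrancl_into_rtrancl)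
    next
      case False
      with step(1) a'_outside have "(a, a') \<in> del_arcs E (Z \<union> B)"
        by (auto simp: del_arcs_def)
      then have "(a', b) \<notin> (del_arcs E (Z \<union> B))\<^sup>*"
        using step(4) by (meson converse_rtrancl_into_rtrancl)
      then show ?thesis
        using step(1,3) by (meson converse_rtrancl_into_rtrancl)
    qed
  qed
qed

(* A path of G - Z' from a vertex outside Z either avoids Z, or some vertex reachable in
   G - Z has an arc into Z - Z'; this is how minimality of separators is exploited. *)
lemma path_leaves_into:
  assumes "(a, b) \<in> (del_arcs E Z')\<^sup>*" "a \<notin> Z"
  shows "(a, b) \<in> (del_arcs E Z)\<^sup>* \<or>
    (\<exists>u w. (a, u) \<in> (del_arcs E Z)\<^sup>* \<and> (u, w) \<in> E \<and> w \<in> Z - Z')"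
  using assms(1)
proof (induction rule: rtrancl_induct)
  case base
  then show ?case by simp
next
  case (step c b)
  then show ?case
  proof (elim disjE)
    assume ac: "(a, c) \<in> (del_arcs E Z)\<^sup>*"
    have "c \<notin> Z"
      using path_avoiding_stays_outside[OF ac assms(2)] .
    show ?thesis
    proof (cases "b \<in> Z")
      case True
      then show ?thesis
        using ac step(2) by (auto simp: del_arcs_def)
    next
      case False
      then have "(c, b) \<in> del_arcs E Z"
        using \<open>c \<notin> Z\<close> step(2) by (auto simp: del_arcs_def)
      with ac show ?thesis
        by (meson rtrancl_into_rtrancl)
    qed
  qed simp
qed

lemma reach_set_subset_if_disjoint:
  assumes "reach_set E Z X \<inter> Z' = {}"
  shows "reach_set E Z X \<subseteq> reach_set E Z' X"
proof
  fix v
  assume "v \<in> reach_set E Z X"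
  then obtain x where x: "x \<in> X" "(x, v) \<in> (del_arcs E Z)\<^sup>*"
    by (auto simp: reach_set_def)
  have "(x, v) \<in> (del_arcs E Z')\<^sup>*"
    using x(2)
  proof (induction rule: rtrancl_induct)
    case (step u w)
    have "u \<in> reach_set E Z X" "w \<in> reach_set E Z X"
      using x(1) step(1,2) by (auto simp: reach_set_def intro: rtrancl_into_rtrancl)
    then have "(u, w) \<in> del_arcs E Z'"
      using step(2) assms by (auto simp: del_arcs_def)
    with step(3) show ?case
      by (rule rtrancl_into_rtrancl)
  qed simp
  then show "v \<in> reach_set E Z' X"
    using x(1) by (auto simp: reach_set_def)
qed

lemma reach_set_out_nbh_subset:
  assumes "X \<subseteq> C"
  shows "reach_set E (out_nbh E C) X \<subseteq> C"
proof
  fix v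
  assume "v \<in> reach_set E (out_nbh E C) X"
  then obtain x where "(x, v) \<in> (del_arcs E (out_nbh E C))\<^sup>*" "x \<in> X"
    by (auto simp: reach_set_def)
  then show "v \<in> C"
  proof (induction rule: rtrancl_induct)
    case (step u w)
    then show ?case
      unfolding del_arcs_def out_nbh_def by blast
  qed (use assms in blast)
qed

lemma reach_set_subset_V:
  assumes "E \<subseteq> V \<times> V" "X \<subseteq> V"
  shows "reach_set E Z X \<subseteq> V"
proof
  fix v
  assume "v \<in> reach_set E Z X"
  then obtain x where "(x, v) \<in> (del_arcs E Z)\<^sup>*" "x \<in> X"
    by (auto simp: reach_set_def)
  then show "v \<in> V"
  proof (induction rule: rtrancl_induct)
    case (step u w)
    then show ?case
      using assms(1) del_arcs_subset[of E Z] by blast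
  qed (use assms(2) in blast)
qed

(* This is why the degree reduction,
   which only rewires arcs leaving the sources, preserves all other reachability. *)
lemma paths_agree_outside:
  assumes agree: "\<And>u v. u \<notin> S \<Longrightarrow> (u, v) \<in> F \<longleftrightarrow> (u, v) \<in> E"
    and closed: "\<And>u v. (u, v) \<in> E \<Longrightarrow> v \<notin> S"
    and u: "u \<notin> S"
  shows "(u, w) \<in> (del_arcs F Z)\<^sup>* \<longleftrightarrow> (u, w) \<in> (del_arcs E Z)\<^sup>*"
proof -
  have outside: "w \<notin> S" if "(u, w) \<in> (del_arcs E Z)\<^sup>*" for w
    using that u closed del_arcs_subset by (induction rule: rtrancl_induct) blast+
  show ?thesis
  proof
    assume "(u, w) \<in> (del_arcs F Z)\<^sup>*"
    then show "(u, w) \<in> (del_arcs E Z)\<^sup>*"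
    proof (induction rule: rtrancl_induct)
      case (step c w)
      then have "(c, w) \<in> del_arcs E Z"
        using agree[OF outside[OF step(3)]] by (auto simp: del_arcs_def)
      with step(3) show ?case
        by (rule rtrancl_into_rtrancl)
    qed simp
  next
    assume "(u, w) \<in> (del_arcs E Z)\<^sup>*"
    then show "(u, w) \<in> (del_arcs F Z)\<^sup>*"
    proof (induction rule: rtrancl_induct)
      case (step c w)
      then have "(c, w) \<in> del_arcs F Z"
        using agree[OF outside[OF step(1)]] by (auto simp: del_arcs_def)
      with step(3) show ?case
        by (rule rtrancl_into_rtrancl)
    qed simp
  qed
qed

(* Minimum x-y separators and, among them, the one with the largest x-side: the unique
   minimum-size important separator, i.e. the mincut closest to y. *)
definition min_sep :: "'a set \<Rightarrow> ('a \<times> 'a) set \<Rightarrow> 'a set \<Rightarrow> 'a \<Rightarrow> 'a \<Rightarrow> 'a set \<Rightarrow> bool" where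
  "min_sep V E T x y Z \<longleftrightarrow> is_sep V E T {x} {y} Z \<and>
     (\<forall>Z'. is_sep V E T {x} {y} Z' \<longrightarrow> card Z \<le> card Z')"

definition closest_min_sep :: "'a set \<Rightarrow> ('a \<times> 'a) set \<Rightarrow> 'a set \<Rightarrow> 'a \<Rightarrow> 'a \<Rightarrow> 'a set \<Rightarrow> bool" where
  "closest_min_sep V E T x y Z \<longleftrightarrow> min_sep V E T x y Z \<and>
     (\<forall>Z'. min_sep V E T x y Z' \<longrightarrow> reach_set E Z' {x} \<subseteq> reach_set E Z {x})"

lemma min_sep_converse: "min_sep V (E\<inverse>) T y x = min_sep V E T x y"
  by (intro ext) (simp add: min_sep_def is_sep_converse)

lemma reach_set_converse: "v \<in> reach_set (E\<inverse>) Z {y} \<longleftrightarrow> (v, y) \<in> (del_arcs E Z)\<^sup>*"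
  by (simp add: reach_set_def path_avoiding_converse)

lemma sep_disjoint_reach_set:
  assumes "is_sep V E T {x} {y} Z"
  shows "reach_set E Z {x} \<inter> Z = {}"
  using assms path_avoiding_stays_outside unfolding reach_set_def is_sep_def by fastforce

lemma out_nbh_reach_set_subset_sep:
  assumes sep: "is_sep V E T {x} {y} Z"
  shows "out_nbh E (reach_set E Z {x}) \<subseteq> Z"
proof
  fix v
  assume "v \<in> out_nbh E (reach_set E Z {x})"
  then obtain u where u: "u \<in> reach_set E Z {x}" "(u, v) \<in> E" "v \<notin> reach_set E Z {x}"
    unfolding out_nbh_def by blast
  have "u \<notin> Z"
    using u(1) sep_disjoint_reach_set[OF sep] by blast
  show "v \<in> Z"
  proof (rule ccontr)
    assume "v \<notin> Z"
    with \<open>u \<notin> Z\<close> u(2) have "(u, v) \<in> del_arcs E Z"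
      by (auto simp: del_arcs_def)
    with u(1) have "v \<in> reach_set E Z {x}"
      unfolding reach_set_def by (auto intro: rtrancl_into_rtrancl)
    with u(3) show False
      by contradiction
  qed
qed

lemma minimal_sep_subset_out_nbh_reach_set:
  assumes min: "minimal_sep V E T {x} {y} Z"
  shows "Z \<subseteq> out_nbh E (reach_set E Z {x})"
proof
  fix z
  assume z: "z \<in> Z"
  have sep: "is_sep V E T {x} {y} Z"
    using min by (simp add: minimal_sep_def)
  have "\<not> is_sep V E T {x} {y} (Z - {z})"
    using min z unfolding minimal_sep_def by blast
  then have "(x, y) \<in> (del_arcs E (Z - {z}))\<^sup>*"
    using sep unfolding is_sep_def by auto
  moreover have "x \<notin> Z" "(x, y) \<notin> (del_arcs E Z)\<^sup>*"
    using sep unfolding is_sep_def by auto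
  ultimately obtain u where "(x, u) \<in> (del_arcs E Z)\<^sup>*" "(u, z) \<in> E"
    using path_leaves_into[of x y E "Z - {z}" Z] by auto
  moreover have "z \<notin> reach_set E Z {x}"
    using sep_disjoint_reach_set[OF sep] z by blast
  ultimately show "z \<in> out_nbh E (reach_set E Z {x})"
    unfolding out_nbh_def reach_set_def by auto
qed

lemma min_sep_imp_minimal_sep:
  assumes "finite V" "min_sep V E T x y Z"
  shows "minimal_sep V E T {x} {y} Z"
  using assms unfolding min_sep_def minimal_sep_def
  by (meson is_sep_def leD psubset_card_mono rev_finite_subset)

lemma min_sep_eq_out_nbh:
  assumes "finite V" "min_sep V E T x y Z"
  shows "Z = out_nbh E (reach_set E Z {x})"
  using assms min_sep_imp_minimal_sep minimal_sep_subset_out_nbh_reach_set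
    out_nbh_reach_set_subset_sep unfolding min_sep_def by (metis subset_antisym)

lemma out_nbh_is_sep:
  assumes sep: "is_sep V E T {x} {y} Z" and sub: "out_nbh E C \<subseteq> Z"
    and x: "x \<in> C" and y: "y \<notin> C"
  shows "is_sep V E T {x} {y} (out_nbh E C)"
proof -
  have "(x, y) \<notin> (del_arcs E (out_nbh E C))\<^sup>*"
    using reach_set_out_nbh_subset[of "{x}" C E] x y unfolding reach_set_def by blast
  then show ?thesis
    using sep sub unfolding is_sep_def by blast
qed

lemma is_sep_Un:
  assumes "is_sep V E T X Y Z1" "is_sep V E T X Y Z2"
  shows "is_sep V E T X Y (Z1 \<union> Z2)"
  using assms path_avoiding_antimono[of _ _ E "Z1 \<union> Z2" Z1] unfolding is_sep_def by blast

(* Submodularity of the out-neighbourhood size, the heart of the uniqueness of the closest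
   minimum separator. *)
lemma out_nbh_submodular:
  assumes fin: "finite (out_nbh E A)" "finite (out_nbh E B)"
  shows "card (out_nbh E (A \<union> B)) + card (out_nbh E (A \<inter> B)) \<le>
    card (out_nbh E A) + card (out_nbh E B)"
proof -
  define NA NB where "NA = out_nbh E A" and "NB = out_nbh E B"
  define P Q where "P = NA - B" and "Q = NB - A"
  have finPQ: "finite P" "finite Q"
    using fin by (auto simp: P_def Q_def NA_def NB_def)
  have "out_nbh E (A \<union> B) \<subseteq> P \<union> Q"
    unfolding P_def Q_def NA_def NB_def out_nbh_def by auto
  then have union: "card (out_nbh E (A \<union> B)) \<le> card (P \<union> Q)"
    using finPQ by (simp add: card_mono)
  have "out_nbh E (A \<inter> B) \<subseteq> (P \<inter> Q) \<union> (NA \<inter> B) \<union> (NB \<inter> A)"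
    unfolding P_def Q_def NA_def NB_def out_nbh_def by auto
  then have "card (out_nbh E (A \<inter> B)) \<le> card ((P \<inter> Q) \<union> (NA \<inter> B) \<union> (NB \<inter> A))"
    using finPQ fin by (intro card_mono) (auto simp: NA_def NB_def)
  also have "\<dots> \<le> card (P \<inter> Q) + card (NA \<inter> B) + card (NB \<inter> A)"
    by (meson add_right_mono card_Un_le le_trans)
  finally have inter:
    "card (out_nbh E (A \<inter> B)) \<le> card (P \<inter> Q) + card (NA \<inter> B) + card (NB \<inter> A)" .
  have "card NA = card (NA \<inter> B) + card P" "card NB = card (NB \<inter> A) + card Q"
    using card_Int_Diff fin unfolding P_def Q_def NA_def NB_def by auto
  then show ?thesis
    using union inter card_Un_Int[OF finPQ] unfolding NA_def NB_def by linarith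
qed

lemma min_sep_union:
  assumes fin: "finite V" and min1: "min_sep V E T x y Z1" and min2: "min_sep V E T x y Z2"
  defines "A \<equiv> reach_set E Z1 {x}" and "B \<equiv> reach_set E Z2 {x}"
  shows "min_sep V E T x y (out_nbh E (A \<union> B)) \<and>
    A \<union> B \<subseteq> reach_set E (out_nbh E (A \<union> B)) {x}"
proof -
  have sep1: "is_sep V E T {x} {y} Z1" and sep2: "is_sep V E T {x} {y} Z2"
    using min1 min2 by (auto simp: min_sep_def)
  have Z1: "Z1 = out_nbh E A" and Z2: "Z2 = out_nbh E B"
    using min_sep_eq_out_nbh[OF fin] min1 min2 by (auto simp: A_def B_def)
  have "finite Z1" "finite Z2"
    using sep1 sep2 fin by (auto simp: is_sep_def intro: rev_finite_subset)
  have x: "x \<in> A" "x \<in> B"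
    by (auto simp: A_def B_def reach_set_def)
  have y: "y \<notin> A" "y \<notin> B"
    using sep1 sep2 by (auto simp: A_def B_def reach_set_def is_sep_def)
  have sep12: "is_sep V E T {x} {y} (Z1 \<union> Z2)"
    using is_sep_Un[OF sep1 sep2] .
  have "out_nbh E (A \<union> B) \<subseteq> Z1 \<union> Z2" "out_nbh E (A \<inter> B) \<subseteq> Z1 \<union> Z2"
    unfolding Z1 Z2 out_nbh_def by blast+
  then have sep_union: "is_sep V E T {x} {y} (out_nbh E (A \<union> B))"
    and sep_inter: "is_sep V E T {x} {y} (out_nbh E (A \<inter> B))"
    using out_nbh_is_sep[OF sep12] x y by simp_all
  have "card Z1 \<le> card (out_nbh E (A \<inter> B))" "card Z1 \<le> card Z2" "card Z2 \<le> card Z1"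
    using min1 min2 sep_inter sep1 sep2 by (auto simp: min_sep_def)
  then have "card (out_nbh E (A \<union> B)) \<le> card Z1"
    using out_nbh_submodular[of E A B] \<open>finite Z1\<close> \<open>finite Z2\<close> unfolding Z1 Z2 by linarith
  then have "min_sep V E T x y (out_nbh E (A \<union> B))"
    using sep_union min1 unfolding min_sep_def by (meson le_trans)
  moreover have "A \<inter> out_nbh E (A \<union> B) = {}" "B \<inter> out_nbh E (A \<union> B) = {}"
    by (auto simp: out_nbh_def)
  then have "A \<union> B \<subseteq> reach_set E (out_nbh E (A \<union> B)) {x}"
    using reach_set_subset_if_disjoint unfolding A_def B_def by blast
  ultimately show ?thesis
    by blast
qed

lemma closest_min_sep_exists:
  assumes fin: "finite V" and EV: "E \<subseteq> V \<times> V" and x: "x \<in> V"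
    and sep: "is_sep V E T {x} {y} Z0"
  obtains Z where "closest_min_sep V E T x y Z"
proof -
  obtain Zm where "is_sep V E T {x} {y} Zm"
    and "\<forall>Z'. is_sep V E T {x} {y} Z' \<longrightarrow> card Zm \<le> card Z'"
    using ex_has_least_nat[of "is_sep V E T {x} {y}" Z0 card] sep by blast
  then have "min_sep V E T x y Zm"
    by (simp add: min_sep_def)
  moreover have "card (reach_set E Z {x}) < Suc (card V)" for Z
    using reach_set_subset_V[OF EV, of "{x}" Z] x fin by (simp add: card_mono le_imp_less_Suc)
  ultimately obtain Z where Z: "min_sep V E T x y Z"
    and greatest: "\<forall>Z'. min_sep V E T x y Z' \<longrightarrow>
      card (reach_set E Z' {x}) \<le> card (reach_set E Z {x})"
    using Lattices_Big.ex_has_greatest_nat[of "min_sep V E T x y" Zm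
        "\<lambda>Z. card (reach_set E Z {x})"]
    by blast
  have "reach_set E Z' {x} \<subseteq> reach_set E Z {x}" if Z': "min_sep V E T x y Z'" for Z'
  proof -
    define U where "U = out_nbh E (reach_set E Z {x} \<union> reach_set E Z' {x})"
    have U: "min_sep V E T x y U"
      and incl: "reach_set E Z {x} \<union> reach_set E Z' {x} \<subseteq> reach_set E U {x}"
      using min_sep_union[OF fin Z Z'] unfolding U_def by auto
    have "finite (reach_set E U {x})"
      using reach_set_subset_V[OF EV, of "{x}" U] x fin by (auto intro: rev_finite_subset)
    moreover have "card (reach_set E U {x}) \<le> card (reach_set E Z {x})"
      using greatest U by blast
    ultimately have "reach_set E Z {x} = reach_set E U {x}"
      using card_seteq incl by blast
    then show ?thesis
      using incl by blast
  qed
  with Z show ?thesis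
    using that unfolding closest_min_sep_def by blast
qed

(* Since a minimum separator is determined by its x-side, the closest one is unique. *)
lemma closest_min_sep_unique:
  assumes "finite V" "closest_min_sep V E T x y Z1" "closest_min_sep V E T x y Z2"
  shows "Z1 = Z2"
proof -
  have "reach_set E Z1 {x} = reach_set E Z2 {x}"
    using assms(2,3) unfolding closest_min_sep_def by blast
  then show ?thesis
    using min_sep_eq_out_nbh[OF assms(1)] assms(2,3) unfolding closest_min_sep_def by metis
qed

(* The closest minimum separator is exactly the mincut closest to y in the sense of
   important separators; in particular the THE in the definition of B_i is well defined. *)
lemma closest_min_sep_imp_mincut_closest_to_Y:
  assumes fin: "finite V" and closest: "closest_min_sep V E T x y Z"
  shows "mincut_closest_to_Y V E T {x} {y} Z"
proof -
  have min: "min_sep V E T x y Z"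
    using closest by (simp add: closest_min_sep_def)
  have no_better: "Z' = Z"
    if Z': "is_sep V E T {x} {y} Z'" "card Z' \<le> card Z" "reach_set E Z {x} \<subseteq> reach_set E Z' {x}"
    for Z'
  proof -
    have min': "min_sep V E T x y Z'"
      using Z' min unfolding min_sep_def by (meson le_trans)
    then have "reach_set E Z' {x} = reach_set E Z {x}"
      using closest Z'(3) unfolding closest_min_sep_def by blast
    then show "Z' = Z"
      using min_sep_eq_out_nbh[OF fin min] min_sep_eq_out_nbh[OF fin min'] by metis
  qed
  have "important_sep V E T {x} {y} Z"
    unfolding important_sep_def using min_sep_imp_minimal_sep[OF fin min] no_better by blast
  moreover have "card Z \<le> card Z'" if "important_sep V E T {x} {y} Z'" for Z'
    using min that unfolding important_sep_def minimal_sep_def min_sep_def by blast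
  ultimately show ?thesis
    unfolding mincut_closest_to_Y_def by blast
qed

lemma mincut_closest_to_Y_imp_closest_min_sep:
  assumes fin: "finite V" and EV: "E \<subseteq> V \<times> V" and x: "x \<in> V"
    and sep0: "is_sep V E T {x} {y} Z0" and mc: "mincut_closest_to_Y V E T {x} {y} Z"
  shows "closest_min_sep V E T x y Z"
proof -
  obtain Zc where closest: "closest_min_sep V E T x y Zc"
    using closest_min_sep_exists[OF fin EV x sep0] by blast
  have min: "min_sep V E T x y Zc"
    using closest by (simp add: closest_min_sep_def)
  have imp: "important_sep V E T {x} {y} Z"
    using mc by (simp add: mincut_closest_to_Y_def)
  then have sep: "is_sep V E T {x} {y} Z"
    by (simp add: important_sep_def minimal_sep_def)
  have "card Z \<le> card Zc"
    using mc closest_min_sep_imp_mincut_closest_to_Y[OF fin closest]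
    unfolding mincut_closest_to_Y_def by blast
  then have "min_sep V E T x y Z"
    using min sep unfolding min_sep_def by (meson le_trans)
  then have "reach_set E Z {x} \<subseteq> reach_set E Zc {x}"
    using closest unfolding closest_min_sep_def by blast
  moreover have "card Zc \<le> card Z"
    using min sep unfolding min_sep_def by blast
  ultimately have "Zc = Z"
    using imp min unfolding important_sep_def min_sep_def by blast
  then show ?thesis
    using closest by simp
qed

lemma the_mincut_closest_to_Y:
  assumes fin: "finite V" and EV: "E \<subseteq> V \<times> V" and x: "x \<in> V"
    and sep0: "is_sep V E T {x} {y} Z0"
  shows "closest_min_sep V E T x y (THE Z. mincut_closest_to_Y V E T {x} {y} Z)"
proof -
  obtain Zc where closest: "closest_min_sep V E T x y Zc"
    using closest_min_sep_exists[OF fin EV x sep0] by blast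
  have "\<exists>!Z. mincut_closest_to_Y V E T {x} {y} Z"
  proof
    show "mincut_closest_to_Y V E T {x} {y} Zc"
      using closest_min_sep_imp_mincut_closest_to_Y[OF fin closest] .
  next
    fix Z
    assume "mincut_closest_to_Y V E T {x} {y} Z"
    then show "Z = Zc"
      using closest_min_sep_unique[OF fin _ closest]
        mincut_closest_to_Y_imp_closest_min_sep[OF fin EV x sep0] by blast
  qed
  then have "mincut_closest_to_Y V E T {x} {y} (THE Z. mincut_closest_to_Y V E T {x} {y} Z)"
    by (rule theI')
  then show ?thesis
    by (rule mincut_closest_to_Y_imp_closest_min_sep[OF fin EV x sep0])
qed

lemma min_sep_cut: "min_sep V E T x y Z \<Longrightarrow> cut V E T {x} {y} = enat (card Z)"
  unfolding cut_def min_sep_def by (rule antisym) (auto intro!: INF_lower INF_greatest)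

lemma is_sep_exists_if_cut_finite:
  assumes "cut V E T X Y \<le> enat p"
  obtains Z where "is_sep V E T X Y Z"
  using assms unfolding cut_def
  by (cases "{Z. is_sep V E T X Y Z} = {}") (auto simp: top_enat_def)

locale dag_mc =
  fixes V :: "'a set" and E :: "('a \<times> 'a) set" and r p :: nat and s t :: "nat \<Rightarrow> 'a"
  assumes inst: "dag_mc_instance V E r s t p"
begin

abbreviation "T \<equiv> terminals r s t"
abbreviation "Sources \<equiv> s ` idx r"
abbreviation "B \<equiv> Bset V E r s t"
abbreviation "Es \<equiv> reduced_arcs V E r s t"

lemma finite_V: "finite V"
  using inst by (simp add: dag_mc_instance_def)

lemma arcs_in_V: "E \<subseteq> V \<times> V"
  using inst by (simp add: dag_mc_instance_def)

lemma sink_in_V: "i \<in> idx r \<Longrightarrow> t i \<in> V"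
  using inst by (auto simp: dag_mc_instance_def)

lemma source_eq_iff: "i \<in> idx r \<Longrightarrow> j \<in> idx r \<Longrightarrow> s j = s i \<longleftrightarrow> j = i"
  using inst by (auto simp: dag_mc_instance_def dest: inj_onD)

lemma source_ne_sink: "i \<in> idx r \<Longrightarrow> j \<in> idx r \<Longrightarrow> s i \<noteq> t j"
  using inst by (auto simp: dag_mc_instance_def)

lemma no_arc_into_source: "(u, v) \<in> E \<Longrightarrow> v \<notin> Sources"
  using inst by (auto simp: dag_mc_instance_def)

lemma cut_le_p: "i \<in> idx r \<Longrightarrow> cut V E T {s i} {t i} \<le> enat p"
  using inst by (simp add: dag_mc_instance_def)

lemma source_terminal: "i \<in> idx r \<Longrightarrow> s i \<in> T"
  and sink_terminal: "i \<in> idx r \<Longrightarrow> t i \<in> T"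
  by (auto simp: terminals_def)

lemma B_closest_converse:
  assumes i: "i \<in> idx r"
  shows "closest_min_sep V (E\<inverse>) T (t i) (s i) (B i)"
proof -
  obtain Z0 where "is_sep V (E\<inverse>) T {t i} {s i} Z0"
    using is_sep_exists_if_cut_finite[of V "E\<inverse>" T "{t i}" "{s i}" p] cut_le_p[OF i]
    by (auto simp: cut_converse)
  moreover have "E\<inverse> \<subseteq> V \<times> V"
    using arcs_in_V by blast
  ultimately show ?thesis
    using the_mincut_closest_to_Y[OF finite_V _ sink_in_V[OF i]]
    by (simp add: Bset_def mincut_closest_to_X_def)
qed

lemma B_min_sep: "i \<in> idx r \<Longrightarrow> min_sep V E T (s i) (t i) (B i)"
  using B_closest_converse by (simp add: closest_min_sep_def min_sep_converse)

lemma B_sep: "i \<in> idx r \<Longrightarrow> is_sep V E T {s i} {t i} (B i)"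
  using B_min_sep by (simp add: min_sep_def)

lemma B_subset_V: "i \<in> idx r \<Longrightarrow> B i \<subseteq> V"
  using B_sep by (simp add: is_sep_def)

lemma B_disjoint_terminals: "i \<in> idx r \<Longrightarrow> B i \<inter> T = {}"
  using B_sep by (simp add: is_sep_def)

lemma B_not_source: "i \<in> idx r \<Longrightarrow> v \<in> B i \<Longrightarrow> v \<notin> Sources"
  using B_disjoint_terminals unfolding terminals_def by blast

lemma B_not_sink: "i \<in> idx r \<Longrightarrow> t i \<notin> B i"
  using B_sep by (auto simp: is_sep_def)

lemma card_B_le:
  assumes "i \<in> idx r"
  shows "card (B i) \<le> p"
proof -
  have "enat (card (B i)) \<le> enat p"
    using cut_le_p[OF assms] min_sep_cut[OF B_min_sep[OF assms]] by simp
  then show ?thesis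
    by simp
qed

lemma B_reachable:
  assumes i: "i \<in> idx r" and v: "v \<in> B i"
  shows "(s i, v) \<in> E\<^sup>*"
proof -
  have "B i \<subseteq> out_nbh E (reach_set E (B i) {s i})"
    using minimal_sep_subset_out_nbh_reach_set min_sep_imp_minimal_sep[OF finite_V B_min_sep[OF i]] .
  then have "v \<in> out_nbh E (reach_set E (B i) {s i})"
    using v by blast
  then obtain u where "(s i, u) \<in> (del_arcs E (B i))\<^sup>*" "(u, v) \<in> E"
    unfolding out_nbh_def reach_set_def by blast
  then show ?thesis
    using path_avoiding_imp_path by (meson rtrancl.rtrancl_into_rtrancl)
qed

lemma reduced_arc_cases:
  assumes "(u, v) \<in> Es"
  obtains (original) "(u, v) \<in> E" "u \<notin> Sources" "v \<notin> Sources"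
  | (to_own_B) i where "i \<in> idx r" "u = s i" "v \<in> B i"
  | (to_other_B) i j where "i \<in> idx r" "u = s i" "j \<in> idx r" "v \<in> B j"
      "(s i, v) \<in> E\<^sup>*" "\<not> (\<exists>b\<in>B i. (b, v) \<in> E\<^sup>*)"
proof -
  have "((u, v) \<in> E \<and> u \<notin> Sources \<and> v \<notin> Sources) \<or> (\<exists>i. i \<in> idx r \<and> u = s i \<and> v \<in> B i) \<or>
    (\<exists>i j. i \<in> idx r \<and> u = s i \<and> j \<in> idx r \<and> v \<in> B j \<and> s i \<in> src_set E r s v \<and>
       \<not> (\<exists>b\<in>B i. (b, v) \<in> E\<^sup>*))"
    using assms unfolding reduced_arcs_def by blast
  then show ?thesis
  proof (elim disjE exE conjE)
    fix i j
    assume "i \<in> idx r" "u = s i" "j \<in> idx r" "v \<in> B j" "s i \<in> src_set E r s v"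
      "\<not> (\<exists>b\<in>B i. (b, v) \<in> E\<^sup>*)"
    then show ?thesis
      using to_other_B by (auto simp: src_set_def)
  qed (use original to_own_B in blast)+
qed

lemma reduced_arc_not_into_source: "(u, v) \<in> Es \<Longrightarrow> v \<notin> Sources"
  by (erule reduced_arc_cases) (auto dest: B_not_source)

lemma reduced_arc_iff_outside_sources: "u \<notin> Sources \<Longrightarrow> (u, v) \<in> Es \<longleftrightarrow> (u, v) \<in> E"
  using no_arc_into_source by (auto simp: reduced_arcs_def)

lemma reduced_arc_to_B: "i \<in> idx r \<Longrightarrow> v \<in> B i \<Longrightarrow> (s i, v) \<in> Es"
  unfolding reduced_arcs_def by blast

lemma reduced_arc_to_unblocked:
  assumes "i \<in> idx r" "j \<in> idx r" "v \<in> B j" "(s i, v) \<in> E\<^sup>*" "\<not> (\<exists>b\<in>B i. (b, v) \<in> E\<^sup>*)"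
  shows "(s i, v) \<in> Es"
  using assms unfolding reduced_arcs_def src_set_def by blast

lemma reduced_path_from_nonsource:
  "u \<notin> Sources \<Longrightarrow> (u, w) \<in> (del_arcs Es Z)\<^sup>* \<longleftrightarrow> (u, w) \<in> (del_arcs E Z)\<^sup>*"
  using paths_agree_outside[of Sources Es E] reduced_arc_iff_outside_sources no_arc_into_source
  by blast

lemma reduced_path_from_source:
  assumes i: "i \<in> idx r" and path: "(s i, w) \<in> (del_arcs Es Z)\<^sup>*" and ne: "w \<noteq> s i"
  obtains v where "(s i, v) \<in> Es" "s i \<notin> Z" "v \<notin> Z" "(v, w) \<in> (del_arcs E Z)\<^sup>*"
proof -
  obtain v where first: "(s i, v) \<in> del_arcs Es Z" and rest: "(v, w) \<in> (del_arcs Es Z)\<^sup>*"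
    using path ne by (metis converse_rtranclE)
  have arc: "(s i, v) \<in> Es" "s i \<notin> Z" "v \<notin> Z"
    using first by (auto simp: del_arcs_def)
  moreover have "(v, w) \<in> (del_arcs E Z)\<^sup>*"
    using rest reduced_path_from_nonsource reduced_arc_not_into_source[OF arc(1)] by blast
  ultimately show ?thesis
    using that by blast
qed

lemma path_to_sink_meets_B:
  assumes i: "i \<in> idx r" and avoid: "(s i, w) \<in> (del_arcs E (B i))\<^sup>*"
    and path: "(w, t i) \<in> (del_arcs E Z)\<^sup>*"
  shows "\<exists>c\<in>B i. c \<notin> Z \<and> (c, t i) \<in> (del_arcs E Z)\<^sup>*"
proof -
  have "(w, t i) \<notin> (del_arcs E (Z \<union> B i))\<^sup>*"
  proof
    assume "(w, t i) \<in> (del_arcs E (Z \<union> B i))\<^sup>*"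
    then have "(w, t i) \<in> (del_arcs E (B i))\<^sup>*"
      by (rule path_avoiding_antimono) blast
    with avoid have "(s i, t i) \<in> (del_arcs E (B i))\<^sup>*"
      by (rule rtrancl_trans)
    then show False
      using B_sep[OF i] by (simp add: is_sep_def)
  qed
  then show ?thesis
    using path_meets_set[OF path] by blast
qed

lemma source_arc_target:
  assumes i: "i \<in> idx r" and arc: "(s i, v) \<in> Es"
  shows "v \<in> B i \<or> (s i, v) \<in> (del_arcs E (B i))\<^sup>*"
  using arc
proof (cases rule: reduced_arc_cases)
  case original
  then show ?thesis
    using i by simp
next
  case (to_own_B j)
  then have "j = i"
    using source_eq_iff[OF i] by metis
  then show ?thesis
    using to_own_B by simp
next
  case (to_other_B j k)
  then have "j = i"
    using source_eq_iff[OF i] by metis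
  then have path: "(s i, v) \<in> (del_arcs E {})\<^sup>*" and unblocked: "\<not> (\<exists>b\<in>B i. (b, v) \<in> E\<^sup>*)"
    using to_other_B(5,6) by (simp_all add: del_arcs_def)
  have "(s i, v) \<in> (del_arcs E ({} \<union> B i))\<^sup>*"
  proof (rule ccontr)
    assume "(s i, v) \<notin> (del_arcs E ({} \<union> B i))\<^sup>*"
    then obtain b where "b \<in> B i" "(b, v) \<in> (del_arcs E {})\<^sup>*"
      using path_meets_set[OF path] by blast
    with unblocked show False
      by (auto dest: path_avoiding_imp_path)
  qed
  then show ?thesis
    by simp
qed

lemma reduced_sink_path_iff:
  assumes i: "i \<in> idx r" and s: "s i \<notin> Z"
  shows "(s i, t i) \<in> (del_arcs Es Z)\<^sup>* \<longleftrightarrow> (\<exists>c\<in>B i. c \<notin> Z \<and> (c, t i) \<in> (del_arcs E Z)\<^sup>*)"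
proof
  assume "(s i, t i) \<in> (del_arcs Es Z)\<^sup>*"
  then obtain v where v: "(s i, v) \<in> Es" "v \<notin> Z" "(v, t i) \<in> (del_arcs E Z)\<^sup>*"
    using reduced_path_from_source[OF i] source_ne_sink[OF i i] by metis
  then show "\<exists>c\<in>B i. c \<notin> Z \<and> (c, t i) \<in> (del_arcs E Z)\<^sup>*"
    using source_arc_target[OF i v(1)] path_to_sink_meets_B[OF i] by blast
next
  assume "\<exists>c\<in>B i. c \<notin> Z \<and> (c, t i) \<in> (del_arcs E Z)\<^sup>*"
  then obtain c where c: "c \<in> B i" "c \<notin> Z" "(c, t i) \<in> (del_arcs E Z)\<^sup>*"
    by blast
  have "(s i, c) \<in> del_arcs Es Z"
    using reduced_arc_to_B[OF i c(1)] s c(2) by (simp add: del_arcs_def)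
  moreover have "(c, t i) \<in> (del_arcs Es Z)\<^sup>*"
    using c(3) reduced_path_from_nonsource B_not_source[OF i c(1)] by blast
  ultimately show "(s i, t i) \<in> (del_arcs Es Z)\<^sup>*"
    by (rule converse_rtrancl_into_rtrancl)
qed

lemma sink_path_meets_B:
  "i \<in> idx r \<Longrightarrow> (s i, t i) \<in> (del_arcs E Z)\<^sup>* \<Longrightarrow> \<exists>c\<in>B i. c \<notin> Z \<and> (c, t i) \<in> (del_arcs E Z)\<^sup>*"
  using path_to_sink_meets_B by blast

lemma reduced_sep_imp_sep:
  assumes i: "i \<in> idx r" and sep: "is_sep V Es T {s i} {t i} Z"
  shows "is_sep V E T {s i} {t i} Z"
proof -
  have "s i \<notin> Z" "(s i, t i) \<notin> (del_arcs Es Z)\<^sup>*"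
    using sep by (simp_all add: is_sep_def)
  then have "(s i, t i) \<notin> (del_arcs E Z)\<^sup>*"
    using reduced_sink_path_iff[OF i] sink_path_meets_B[OF i] by metis
  then show ?thesis
    using sep by (simp add: is_sep_def)
qed

lemma B_sep_reduced:
  assumes i: "i \<in> idx r"
  shows "is_sep V Es T {s i} {t i} (B i)"
proof -
  have "s i \<notin> B i"
    using B_not_source[OF i] i by blast
  then have "(s i, t i) \<notin> (del_arcs Es (B i))\<^sup>*"
    using reduced_sink_path_iff[OF i] by blast
  then show ?thesis
    using B_sep[OF i] by (simp add: is_sep_def)
qed

lemma B_min_sep_reduced:
  assumes i: "i \<in> idx r"
  shows "min_sep V Es T (s i) (t i) (B i)"
proof -
  have "card (B i) \<le> card Z" if "is_sep V Es T {s i} {t i} Z" for Z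
    using B_min_sep[OF i] reduced_sep_imp_sep[OF i that] by (simp add: min_sep_def)
  then show ?thesis
    using B_sep_reduced[OF i] by (simp add: min_sep_def)
qed

lemma min_sep_reduced_imp_min_sep:
  assumes i: "i \<in> idx r" and min: "min_sep V Es T (s i) (t i) Z"
  shows "min_sep V E T (s i) (t i) Z"
proof -
  have sep: "is_sep V E T {s i} {t i} Z"
    using min reduced_sep_imp_sep[OF i] by (simp add: min_sep_def)
  have "card Z \<le> card (B i)"
    using min B_sep_reduced[OF i] by (simp add: min_sep_def)
  moreover have "\<forall>Z'. is_sep V E T {s i} {t i} Z' \<longrightarrow> card (B i) \<le> card Z'"
    using B_min_sep[OF i] by (simp add: min_sep_def)
  ultimately show ?thesis
    using sep unfolding min_sep_def by (meson le_trans)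
qed

lemma path_to_sink_avoids_B:
  assumes i: "i \<in> idx r" and min: "min_sep V E T (s i) (t i) Z"
    and path: "(u, t i) \<in> (del_arcs E Z)\<^sup>*"
  shows "(u, t i) \<in> (del_arcs E (B i))\<^sup>*"
proof -
  have "reach_set (E\<inverse>) Z {t i} \<subseteq> reach_set (E\<inverse>) (B i) {t i}"
    using B_closest_converse[OF i] min by (simp add: closest_min_sep_def min_sep_converse)
  then show ?thesis
    using path by (auto simp: reach_set_converse)
qed

(* For a vertex outside the sources this is the fact in G; a source s_j
   reaches t_i only through a new arc (s_j, w), and w lies outside B_i since it reaches t_i
   avoiding B_i. *)
lemma reduced_path_to_sink_avoids_B:
  assumes i: "i \<in> idx r" and min: "min_sep V Es T (s i) (t i) Z"
    and path: "(v, t i) \<in> (del_arcs Es Z)\<^sup>*"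
  shows "(v, t i) \<in> (del_arcs Es (B i))\<^sup>*"
proof -
  have to_sink: "(u, t i) \<in> (del_arcs E (B i))\<^sup>*" if "(u, t i) \<in> (del_arcs E Z)\<^sup>*" for u
    using path_to_sink_avoids_B[OF i min_sep_reduced_imp_min_sep[OF i min] that] .
  show ?thesis
  proof (cases "v \<in> Sources")
    case False
    then show ?thesis
      using path to_sink reduced_path_from_nonsource by blast
  next
    case True
    then obtain j where j: "j \<in> idx r" "v = s j"
      by blast
    then obtain w where w: "(s j, w) \<in> Es" "(w, t i) \<in> (del_arcs E Z)\<^sup>*"
      using reduced_path_from_source[OF j(1), where w = "t i" and Z = Z] path
        source_ne_sink[OF j(1) i] by metis
    have w_to_sink: "(w, t i) \<in> (del_arcs E (B i))\<^sup>*"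
      using to_sink[OF w(2)] .
    then have "w \<notin> B i"
      using path_avoiding_stays_outside_backward B_not_sink[OF i] by metis
    moreover have "s j \<notin> B i"
      using B_not_source[OF i] j(1) by blast
    ultimately have "(s j, w) \<in> del_arcs Es (B i)"
      using w(1) by (simp add: del_arcs_def)
    moreover have "(w, t i) \<in> (del_arcs Es (B i))\<^sup>*"
      using w_to_sink reduced_path_from_nonsource reduced_arc_not_into_source[OF w(1)] by blast
    ultimately show ?thesis
      using j(2) by (simp add: converse_rtrancl_into_rtrancl)
  qed
qed

lemma B_closest_reduced_converse:
  assumes i: "i \<in> idx r"
  shows "closest_min_sep V (Es\<inverse>) T (t i) (s i) (B i)"
proof -
  have "reach_set (Es\<inverse>) Z {t i} \<subseteq> reach_set (Es\<inverse>) (B i) {t i}"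
    if "min_sep V (Es\<inverse>) T (t i) (s i) Z" for Z
    using reduced_path_to_sink_avoids_B[OF i] that
    by (auto simp: reach_set_converse min_sep_converse)
  then show ?thesis
    using B_min_sep_reduced[OF i] by (simp add: closest_min_sep_def min_sep_converse)
qed

lemma B_mincut_closest_reduced: "i \<in> idx r \<Longrightarrow> mincut_closest_to_X V Es T {s i} {t i} (B i)"
  unfolding mincut_closest_to_X_def
  by (rule closest_min_sep_imp_mincut_closest_to_Y[OF finite_V B_closest_reduced_converse])

lemma cut_reduced_eq: "i \<in> idx r \<Longrightarrow> cut V Es T {s i} {t i} = cut V E T {s i} {t i}"
  using min_sep_cut[OF B_min_sep_reduced] min_sep_cut[OF B_min_sep] by simp

lemma potential_reduced_eq: "potential V Es r s t p = potential V E r s t p"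
  unfolding potential_def using cut_reduced_eq by (simp cong: sum.cong)

(* Part (4): the side condition on B_i says that no vertex of B_i - Z reaches t_i in G - Z, which
   by the key lemma is exactly what a multicut of G* needs. *)
lemma B_condition_iff:
  assumes i: "i \<in> idx r" and Z: "Z \<subseteq> V" "Z \<inter> T = {}"
  shows "(\<forall>v\<in>B i. v \<in> Z \<or> is_sep V E T {v} {t i} Z) \<longleftrightarrow>
    \<not> (\<exists>c\<in>B i. c \<notin> Z \<and> (c, t i) \<in> (del_arcs E Z)\<^sup>*)"
proof -
  have "t i \<notin> Z"
    using Z(2) sink_terminal[OF i] by blast
  then have "is_sep V E T {v} {t i} Z \<longleftrightarrow> (v, t i) \<notin> (del_arcs E Z)\<^sup>*" if "v \<notin> Z" for v
    using Z that by (simp add: is_sep_def)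
  then show ?thesis
    by blast
qed

lemma multicut_reduced_iff:
  "multicut V Es r s t Z \<longleftrightarrow>
    multicut V E r s t Z \<and> (\<forall>i\<in>idx r. \<forall>v\<in>B i. v \<in> Z \<or> is_sep V E T {v} {t i} Z)"
proof (cases "Z \<subseteq> V \<and> Z \<inter> T = {}")
  case True
  define unblocked where
    "unblocked \<longleftrightarrow> (\<forall>i\<in>idx r. \<not> (\<exists>c\<in>B i. c \<notin> Z \<and> (c, t i) \<in> (del_arcs E Z)\<^sup>*))"
  have s: "s i \<notin> Z" if "i \<in> idx r" for i
    using True source_terminal[OF that] by blast
  have "multicut V Es r s t Z \<longleftrightarrow> unblocked"
    using True by (simp add: multicut_def unblocked_def reduced_sink_path_iff s)
  moreover have "(\<forall>i\<in>idx r. \<forall>v\<in>B i. v \<in> Z \<or> is_sep V E T {v} {t i} Z) \<longleftrightarrow> unblocked"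
    using True by (simp add: unblocked_def B_condition_iff)
  moreover have "multicut V E r s t Z" if unblocked
  proof -
    have "(s i, t i) \<notin> (del_arcs E Z)\<^sup>*" if "i \<in> idx r" for i
      using sink_path_meets_B[OF that] \<open>unblocked\<close> that unfolding unblocked_def by blast
    then show ?thesis
      using True by (simp add: multicut_def)
  qed
  ultimately show ?thesis
    by blast
qed (auto simp: multicut_def)

(* Part (1): all new arcs end in the union of the B_i, each of size at most p. *)
lemma out_nbh_sources_subset_B: "out_nbh Es Sources \<subseteq> (\<Union>i\<in>idx r. B i)"
proof
  fix v
  assume "v \<in> out_nbh Es Sources"
  then obtain u where u: "u \<in> Sources" "(u, v) \<in> Es"
    by (auto simp: out_nbh_def)
  from u(2) show "v \<in> (\<Union>i\<in>idx r. B i)"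
    by (cases rule: reduced_arc_cases) (use u(1) in blast)+
qed

lemma card_out_nbh_sources_le: "card (out_nbh Es Sources) \<le> r * p"
proof -
  have "finite (\<Union>i\<in>idx r. B i)"
    using B_subset_V finite_V by (meson UN_least finite_subset)
  then have "card (out_nbh Es Sources) \<le> card (\<Union>i\<in>idx r. B i)"
    using out_nbh_sources_subset_B by (rule card_mono)
  also have "\<dots> \<le> (\<Sum>i\<in>idx r. card (B i))"
    by (rule card_UN_le) (simp add: idx_def)
  also have "\<dots> \<le> (\<Sum>i\<in>idx r. p)"
    by (rule sum_mono) (rule card_B_le)
  also have "\<dots> = r * p"
    by (simp add: idx_def)
  finally show ?thesis .
qed

(* Part (5): arcs of G* are paths of G, so G* has fewer source-to-vertex connections; a vertex
   entered by a new arc lies in some B_k and keeps all its sources, either via B_j or directly. *)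
lemma reduced_arc_imp_path: "(u, v) \<in> Es \<Longrightarrow> (u, v) \<in> E\<^sup>*"
  by (erule reduced_arc_cases) (auto intro: B_reachable)

lemma src_set_reduced_subset: "src_set Es r s v \<subseteq> src_set E r s v"
proof -
  have "Es\<^sup>* \<subseteq> E\<^sup>*"
    by (rule rtrancl_subset_rtrancl) (auto intro: reduced_arc_imp_path)
  then show ?thesis
    unfolding src_set_def by blast
qed

lemma src_set_reduced_eq:
  assumes i: "i \<in> idx r" and arc: "(s i, v) \<in> Es"
  shows "src_set Es r s v = src_set E r s v"
proof
  show "src_set Es r s v \<subseteq> src_set E r s v"
    by (rule src_set_reduced_subset)
  obtain k where k: "k \<in> idx r" "v \<in> B k"
    using arc by (cases rule: reduced_arc_cases) (use i in blast)+
  have "(s j, v) \<in> Es\<^sup>*" if j: "j \<in> idx r" "(s j, v) \<in> E\<^sup>*" for j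
  proof (cases "\<exists>b\<in>B j. (b, v) \<in> E\<^sup>*")
    case True
    then obtain b where b: "b \<in> B j" "(b, v) \<in> E\<^sup>*"
      by blast
    then have "(b, v) \<in> Es\<^sup>*"
      using reduced_path_from_nonsource[of b v "{}"] B_not_source[OF j(1) b(1)] by simp
    with reduced_arc_to_B[OF j(1) b(1)] show ?thesis
      by (rule converse_rtrancl_into_rtrancl)
  next
    case False
    then show ?thesis
      using reduced_arc_to_unblocked[OF j(1) k j(2)] by blast
  qed
  then show "src_set E r s v \<subseteq> src_set Es r s v"
    unfolding src_set_def by blast
qed

end

theorem mainTheorem11:
  fixes V :: "'a set" and E :: "('a \<times> 'a) set" and r p :: nat and s t :: "nat \<Rightarrow> 'a"
  assumes inst: "dag_mc_instance V E r s t p"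
  defines "Es \<equiv> reduced_arcs V E r s t"
      and "T \<equiv> terminals r s t"
      and "B \<equiv> Bset V E r s t"
  shows "card (out_nbh Es (s ` idx r)) \<le> r * p \<and>
    (\<forall>i\<in>idx r. mincut_closest_to_X V Es T {s i} {t i} (B i)) \<and>
    (potential V Es r s t p = potential V E r s t p) \<and>
    (\<forall>Z \<subseteq> V. multicut V Es r s t Z \<longleftrightarrow>
           (multicut V E r s t Z \<and>
            (\<forall>i\<in>idx r. \<forall>v\<in>B i. v \<in> Z \<or> is_sep V E T {v} {t i} Z))) \<and>
    ((\<exists>Z. solution V Es r s t p Z) \<longleftrightarrow>
           (\<exists>Z. solution V E r s t p Z \<and>
              (\<forall>i\<in>idx r. \<forall>v\<in>B i. v \<in> Z \<or> is_sep V E T {v} {t i} Z))) \<and>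
    (\<forall>v\<in>V. src_set Es r s v \<subseteq> src_set E r s v) \<and>
    (\<forall>i\<in>idx r. \<forall>v. (s i, v) \<in> Es \<longrightarrow> src_set Es r s v = src_set E r s v)"
proof -
  have G: "dag_mc V E r p s t"
    using inst by (rule dag_mc.intro)
  have multicut_iff: "multicut V Es r s t Z \<longleftrightarrow>
      multicut V E r s t Z \<and> (\<forall>i\<in>idx r. \<forall>v\<in>B i. v \<in> Z \<or> is_sep V E T {v} {t i} Z)" for Z
    unfolding Es_def T_def B_def by (rule dag_mc.multicut_reduced_iff[OF G])
  then have solution_iff: "(\<exists>Z. solution V Es r s t p Z) \<longleftrightarrow>
      (\<exists>Z. solution V E r s t p Z \<and> (\<forall>i\<in>idx r. \<forall>v\<in>B i. v \<in> Z \<or> is_sep V E T {v} {t i} Z))"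
    unfolding solution_def by blast
  show ?thesis
  proof (intro conjI)
    show "card (out_nbh Es (s ` idx r)) \<le> r * p"
      unfolding Es_def by (rule dag_mc.card_out_nbh_sources_le[OF G])
    show "\<forall>i\<in>idx r. mincut_closest_to_X V Es T {s i} {t i} (B i)"
      unfolding Es_def T_def B_def using dag_mc.B_mincut_closest_reduced[OF G] by blast
    show "potential V Es r s t p = potential V E r s t p"
      unfolding Es_def by (rule dag_mc.potential_reduced_eq[OF G])
    show "\<forall>Z \<subseteq> V. multicut V Es r s t Z \<longleftrightarrow>
        (multicut V E r s t Z \<and> (\<forall>i\<in>idx r. \<forall>v\<in>B i. v \<in> Z \<or> is_sep V E T {v} {t i} Z))"
      using multicut_iff by blast
    show "\<forall>v\<in>V. src_set Es r s v \<subseteq> src_set E r s v"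
      unfolding Es_def using dag_mc.src_set_reduced_subset[OF G] by blast
    show "\<forall>i\<in>idx r. \<forall>v. (s i, v) \<in> Es \<longrightarrow> src_set Es r s v = src_set E r s v"
      unfolding Es_def using dag_mc.src_set_reduced_eq[OF G] by blast
  qed (rule solution_iff)
qed

end
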